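(* Let $n\ge1$, $K>0$, $\beta>0$ and $\mu>0$. Suppose that \[ \|u\|_2^2 \leq \frac{1}{K^2}\|\nabla u\|_2^2 + \mu \qquad\text{for all } u\in {\rm H}^1(\mathbb{R}^n) \text{ with } \|u\|_2^2=\beta . \] Then for every $u\in {\rm H}^1(\mathbb{R}^n)$ with $\|u\|_2^2=\beta$, \[ \mu \;\geq\; \int_{\{\xi:\,|\xi|\leq K\}} |\widehat{u}(\xi)|^2\, {\rm d}\xi . \]
   Context: $\|\cdot\|_2$ is the ${\rm L}^2(\mathbb{R}^n)$ norm. The Fourier transform is $\widehat v(\xi) = (2\pi)^{-n}\int_{\mathbb{R}^n} e^{-{\rm i}x\cdot\xi} v(x)\,{\rm d}x$. *)

theory Defs
  imports "HOL-Analysis.Analysis"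
begin

text \<open>Functions on R^n are modelled as functions on an arbitrary Euclidean space 'a,
  with n = DIM('a) >= 1, equipped with Lebesgue (Borel) measure lborel.\<close>

definition square_integrable :: "('a::euclidean_space \<Rightarrow> complex) \<Rightarrow> bool" where
  "square_integrable f \<longleftrightarrow> f \<in> borel_measurable lborel \<and>
     integrable lborel (\<lambda>x. (cmod (f x))^2)"

definition l2norm_sq :: "('a::euclidean_space \<Rightarrow> complex) \<Rightarrow> real" where
  "l2norm_sq f = (LINT x|lborel. (cmod (f x))^2)"

definition test_fun :: "('a::euclidean_space \<Rightarrow> real) \<Rightarrow> bool" where
  "test_fun \<phi> \<longleftrightarrow> (\<forall>x. \<phi> differentiable (at x)) \<and>
     (\<forall>b\<in>Basis. continuous_on UNIV (\<lambda>x. frechet_derivative \<phi> (at x) b)) \<and>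
     bounded {x. \<phi> x \<noteq> 0}"

definition weak_deriv :: "('a::euclidean_space \<Rightarrow> complex) \<Rightarrow> 'a \<Rightarrow> ('a \<Rightarrow> complex) \<Rightarrow> bool" where
  "weak_deriv u b g \<longleftrightarrow> (\<forall>\<phi>. test_fun \<phi> \<longrightarrow>
     (LINT x|lborel. u x * of_real (frechet_derivative \<phi> (at x) b)) =
     - (LINT x|lborel. g x * of_real (\<phi> x)))"

definition H1 :: "('a::euclidean_space \<Rightarrow> complex) \<Rightarrow> bool" where
  "H1 u \<longleftrightarrow> square_integrable u \<and>
     (\<forall>b\<in>Basis. \<exists>g. square_integrable g \<and> weak_deriv u b g)"

definition weak_partial :: "('a::euclidean_space \<Rightarrow> complex) \<Rightarrow> 'a \<Rightarrow> ('a \<Rightarrow> complex)" where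
  "weak_partial u b = (SOME g. square_integrable g \<and> weak_deriv u b g)"

text \<open>Squared L^2 norm of the gradient (well defined: weak derivatives are unique a.e.).\<close>
definition grad_norm_sq :: "('a::euclidean_space \<Rightarrow> complex) \<Rightarrow> real" where
  "grad_norm_sq u = (\<Sum>b\<in>Basis. l2norm_sq (weak_partial u b))"

definition fourier_L1 :: "('a::euclidean_space \<Rightarrow> complex) \<Rightarrow> 'a \<Rightarrow> complex" where
  "fourier_L1 v \<xi> = of_real ((2 * pi) powr (- real DIM('a))) *
     (LINT x|lborel. exp (- \<i> * of_real (x \<bullet> \<xi>)) * v x)"

text \<open>v is the (L^2, Plancherel) Fourier transform of the L^2 function u: v is in L^2 and
  satisfies the duality relation with every integrable, square-integrable function,
  which determines v a.e. and extends the integral formula.\<close>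
definition is_fourier_L2 :: "('a::euclidean_space \<Rightarrow> complex) \<Rightarrow> ('a \<Rightarrow> complex) \<Rightarrow> bool" where
  "is_fourier_L2 u v \<longleftrightarrow> square_integrable v \<and>
     (\<forall>\<phi>. integrable lborel \<phi> \<and> square_integrable \<phi> \<longrightarrow>
        (LINT \<xi>|lborel. v \<xi> * \<phi> \<xi>) = (LINT x|lborel. u x * fourier_L1 \<phi> x))"

end

theory Submission
  imports Defs "HOL-Probability.Characteristic_Functions"
begin

text \<open>
  The hypothesis already forces \<open>\<beta> \<le> \<mu>\<close>: if \<open>u \<in> H\<^sup>1\<close> has \<open>\<parallel>u\<parallel>\<^sup>2 = \<beta>\<close>, so does its
  \<open>L\<^sup>2\<close>-normalised dilation \<open>c\<^sup>n\<^sup>/\<^sup>2 u(c x)\<close>, whose squared gradient norm is \<open>c\<^sup>2 \<parallel>\<nabla>u\<parallel>\<^sup>2\<close>; let \<open>c \<rightarrow> 0\<close>.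
  Identifying the weak gradient of the dilation needs uniqueness of weak derivatives, i.e. the
  fundamental lemma of the calculus of variations, which is proved with \<open>C\<^sup>1\<close> bumps approximating boxes.

  On the other hand \<open>\<integral>\<^sub>S \<bar>v\<bar>\<^sup>2 \<le> (2\<pi>)\<^sup>-\<^sup>n \<parallel>u\<parallel>\<^sup>2\<close> for every set \<open>S\<close> of finite measure: testing the
  duality relation that defines \<open>v\<close> with \<open>w = 1\<^sub>S cnj v\<close> and applying Cauchy-Schwarz reduces this
  to the Plancherel inequality \<open>\<parallel>F w\<parallel>\<^sup>2 \<le> (2\<pi>)\<^sup>-\<^sup>n \<parallel>w\<parallel>\<^sup>2\<close> for integrable \<open>w\<close>. That inequality follows
  by inserting a Gaussian weight \<open>exp (- \<epsilon> \<bar>\<xi>\<bar>\<^sup>2)\<close>, applying Fubini and Schur's test to the resulting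
  Gaussian kernel, and letting \<open>\<epsilon> \<rightarrow> 0\<close>.
\<close>

section \<open>Test functions approximating indicators of boxes\<close>

definition pos_sq :: "real \<Rightarrow> real" where
  "pos_sq t = (if t \<le> 0 then 0 else t\<^sup>2)"

lemma has_real_derivative_mult_abs: "((\<lambda>t::real. t * \<bar>t\<bar>) has_real_derivative 2 * \<bar>x\<bar>) (at x)"
proof (cases "x = 0")
  case True
  have "((\<lambda>h::real. \<bar>h\<bar>) \<longlongrightarrow> 0) (at 0)"
    using tendsto_rabs[OF tendsto_ident_at[of 0 UNIV]] by simp
  then have "((\<lambda>h. (h * \<bar>h\<bar> - 0 * \<bar>0\<bar>) / h) \<longlongrightarrow> (0::real)) (at 0)"
    by (rule Lim_transform_eventually) (auto simp: eventually_at_filter)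
  then show ?thesis using True by (simp add: has_field_derivative_iff)
next
  case False
  then consider "x > 0" | "x < 0" by linarith
  then show ?thesis
  proof cases
    case 1
    have "((\<lambda>t::real. t * t) has_real_derivative 2 * \<bar>x\<bar>) (at x)"
      using 1 by (auto intro!: derivative_eq_intros)
    then show ?thesis
      by (rule has_field_derivative_transform_within_open[where S="{0<..}"]) (use 1 in auto)
  next
    case 2
    have "((\<lambda>t::real. - (t * t)) has_real_derivative 2 * \<bar>x\<bar>) (at x)"
      using 2 by (auto intro!: derivative_eq_intros)
    then show ?thesis
      by (rule has_field_derivative_transform_within_open[where S="{..<0}"]) (use 2 in auto)
  qed
qed

lemma has_real_derivative_pos_sq: "(pos_sq has_real_derivative 2 * max 0 x) (at x)"
proof -
  have "((\<lambda>t. (t * \<bar>t\<bar> + t * t) / 2) has_real_derivative 2 * max 0 x) (at x)"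
    by (rule derivative_eq_intros has_real_derivative_mult_abs refl | simp add: max_def)+
  moreover have "(\<lambda>t. (t * \<bar>t\<bar> + t * t) / 2) = pos_sq"
    by (auto simp: pos_sq_def power2_eq_square fun_eq_iff)
  ultimately show ?thesis by simp
qed

text \<open>A \<open>C\<^sup>1\<close> quadratic spline rising from 0 on \<open>t \<le> 0\<close> to 1 on \<open>t \<ge> 1\<close>.\<close>

definition smooth_step :: "real \<Rightarrow> real" where
  "smooth_step t = 2 * pos_sq t - 4 * pos_sq (t - 1/2) + 2 * pos_sq (t - 1)"

definition smooth_step' :: "real \<Rightarrow> real" where
  "smooth_step' t = 4 * max 0 t - 8 * max 0 (t - 1/2) + 4 * max 0 (t - 1)"

lemma has_real_derivative_smooth_step: "(smooth_step has_real_derivative smooth_step' x) (at x)"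
  unfolding smooth_step_def[abs_def] smooth_step'_def
  by (rule derivative_eq_intros has_real_derivative_pos_sq[THEN DERIV_chain2] refl | simp)+

lemma smooth_step_eq_0: "t \<le> 0 \<Longrightarrow> smooth_step t = 0"
  by (simp add: smooth_step_def pos_sq_def)

lemma smooth_step_eq_1: "t \<ge> 1 \<Longrightarrow> smooth_step t = 1"
  by (simp add: smooth_step_def pos_sq_def power2_eq_square algebra_simps)

lemma smooth_step_bounds: "0 \<le> smooth_step t" "smooth_step t \<le> 1"
proof -
  consider "t \<le> 0" | "0 < t" "t \<le> 1/2" | "1/2 < t" "t < 1" | "t \<ge> 1" by linarith
  then have "0 \<le> smooth_step t \<and> smooth_step t \<le> 1"
  proof cases
    case 2
    have "t * t \<le> 1/2 * (1/2)" using 2 by (intro mult_mono) auto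
    then show ?thesis using 2 by (simp add: smooth_step_def pos_sq_def power2_eq_square)
  next
    case 3
    have "(1 - t) * (1 - t) \<le> 1/2 * (1/2)" using 3 by (intro mult_mono) auto
    moreover have "smooth_step t = 1 - 2 * ((1 - t) * (1 - t))"
      using 3 by (simp add: smooth_step_def pos_sq_def power2_eq_square algebra_simps)
    ultimately show ?thesis by simp
  qed (simp_all add: smooth_step_eq_0 smooth_step_eq_1)
  then show "0 \<le> smooth_step t" "smooth_step t \<le> 1" by auto
qed

lemma continuous_on_smooth_step [continuous_intros]:
  "continuous_on S g \<Longrightarrow> continuous_on S (\<lambda>x. smooth_step (g x))"
  unfolding smooth_step_def pos_sq_def power2_eq_square
  by (rule continuous_on_compose2[of UNIV _ S g, OF _ _ subset_UNIV])
     (auto intro!: continuous_intros continuous_on_cases_le)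

lemma continuous_on_smooth_step' [continuous_intros]:
  "continuous_on S g \<Longrightarrow> continuous_on S (\<lambda>x. smooth_step' (g x))"
  unfolding smooth_step'_def by (intro continuous_intros)

definition bump_factor :: "real \<Rightarrow> 'a::euclidean_space \<Rightarrow> 'a \<Rightarrow> 'a \<Rightarrow> 'a \<Rightarrow> real" where
  "bump_factor k l u i x = smooth_step (k * (x \<bullet> i - l \<bullet> i)) * smooth_step (k * (u \<bullet> i - x \<bullet> i))"

definition bump_factor' :: "real \<Rightarrow> 'a::euclidean_space \<Rightarrow> 'a \<Rightarrow> 'a \<Rightarrow> 'a \<Rightarrow> 'a \<Rightarrow> real" where
  "bump_factor' k l u i x v =
     k * (v \<bullet> i) * smooth_step' (k * (x \<bullet> i - l \<bullet> i)) * smooth_step (k * (u \<bullet> i - x \<bullet> i))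
     - k * (v \<bullet> i) * smooth_step (k * (x \<bullet> i - l \<bullet> i)) * smooth_step' (k * (u \<bullet> i - x \<bullet> i))"

definition box_bump :: "real \<Rightarrow> 'a::euclidean_space \<Rightarrow> 'a \<Rightarrow> 'a \<Rightarrow> real" where
  "box_bump k l u x = (\<Prod>i\<in>Basis. bump_factor k l u i x)"

lemma has_derivative_bump_factor: "(bump_factor k l u i has_derivative bump_factor' k l u i x) (at x)"
  unfolding bump_factor_def[abs_def] bump_factor'_def[abs_def]
  by (rule has_derivative_eq_rhs,
      (rule derivative_eq_intros DERIV_compose_FDERIV[OF has_real_derivative_smooth_step] refl)+)
     (simp add: fun_eq_iff algebra_simps inner_simps)

lemma has_derivative_box_bump:
  "(box_bump k l u has_derivative
     (\<lambda>v. \<Sum>i\<in>Basis. bump_factor' k l u i x v * (\<Prod>j\<in>Basis - {i}. bump_factor k l u j x))) (at x)"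
  unfolding box_bump_def[abs_def]
  by (rule has_derivative_prod[where f="\<lambda>i. bump_factor k l u i", OF has_derivative_bump_factor])

lemma box_bump_eq_0:
  assumes "x \<notin> box l u" "k > 0"
  shows "box_bump k l u x = 0"
proof -
  obtain i where i: "i \<in> Basis" "x \<bullet> i \<le> l \<bullet> i \<or> u \<bullet> i \<le> x \<bullet> i"
    using assms(1) by (auto simp: mem_box not_less)
  then have "bump_factor k l u i x = 0"
    using assms(2) by (auto simp: bump_factor_def smooth_step_eq_0 mult_nonneg_nonpos)
  then show ?thesis
    using i unfolding box_bump_def by (metis finite_Basis prod_zero_iff)
qed

lemma box_bump_bounds: "0 \<le> box_bump k l u x" "box_bump k l u x \<le> 1"
  unfolding box_bump_def bump_factor_def
  by (intro prod_nonneg prod_le_1 mult_nonneg_nonneg mult_le_one conjI smooth_step_bounds)+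

lemma test_fun_box_bump:
  assumes "k > 0"
  shows "test_fun (box_bump k l u)"
  unfolding test_fun_def
proof (intro conjI ballI allI)
  show "box_bump k l u differentiable at x" for x
    using has_derivative_box_bump differentiable_def by blast
  fix b :: 'a
  have "(\<lambda>x. frechet_derivative (box_bump k l u) (at x) b) =
     (\<lambda>x. \<Sum>i\<in>Basis. bump_factor' k l u i x b * (\<Prod>j\<in>Basis - {i}. bump_factor k l u j x))"
    by (simp add: fun_eq_iff frechet_derivative_at[OF has_derivative_box_bump, symmetric])
  then show "continuous_on UNIV (\<lambda>x. frechet_derivative (box_bump k l u) (at x) b)"
    unfolding bump_factor'_def bump_factor_def by (simp only:) (intro continuous_intros)
next
  have "{x. box_bump k l u x \<noteq> 0} \<subseteq> cbox l u"
    using box_bump_eq_0 box_subset_cbox assms by blast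
  then show "bounded {x. box_bump k l u x \<noteq> 0}"
    using bounded_cbox bounded_subset by blast
qed

lemma box_bump_tendsto_indicator:
  "(\<lambda>n. box_bump (real (Suc n)) l u x) \<longlonglongrightarrow> indicator (box l u) x"
proof (cases "x \<in> box l u")
  case False
  then show ?thesis by (simp add: box_bump_eq_0)
next
  case True
  define d where "d = Min ((\<lambda>i. min (x \<bullet> i - l \<bullet> i) (u \<bullet> i - x \<bullet> i)) ` Basis)"
  have "d > 0"
    using True unfolding d_def by (auto simp: mem_box)
  have d_le: "d \<le> x \<bullet> i - l \<bullet> i" "d \<le> u \<bullet> i - x \<bullet> i" if "i \<in> Basis" for i
    using Min_le[of "(\<lambda>i. min (x \<bullet> i - l \<bullet> i) (u \<bullet> i - x \<bullet> i)) ` Basis"] that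
    unfolding d_def by fastforce+
  obtain N where N: "real N > 1 / d"
    using reals_Archimedean2 by blast
  have "box_bump (real (Suc n)) l u x = 1" if "n \<ge> N" for n
  proof -
    have "1 < real N * d"
      using N \<open>d > 0\<close> by (simp add: divide_less_eq)
    moreover have "real N * d \<le> real (Suc n) * d"
      using that \<open>d > 0\<close> by (intro mult_right_mono) auto
    ultimately have "1 \<le> real (Suc n) * d"
      by linarith
    have "smooth_step (real (Suc n) * (x \<bullet> i - l \<bullet> i)) = 1"
      "smooth_step (real (Suc n) * (u \<bullet> i - x \<bullet> i)) = 1" if "i \<in> Basis" for i
    proof -
      have "real (Suc n) * d \<le> real (Suc n) * (x \<bullet> i - l \<bullet> i)"
        "real (Suc n) * d \<le> real (Suc n) * (u \<bullet> i - x \<bullet> i)"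
        using d_le[OF that] by (intro mult_left_mono; simp)+
      then show "smooth_step (real (Suc n) * (x \<bullet> i - l \<bullet> i)) = 1"
        "smooth_step (real (Suc n) * (u \<bullet> i - x \<bullet> i)) = 1"
        using \<open>1 \<le> real (Suc n) * d\<close> by (intro smooth_step_eq_1; linarith)+
    qed
    then show ?thesis
      unfolding box_bump_def bump_factor_def by simp
  qed
  then show ?thesis
    using True by (intro tendsto_eventually) (auto simp: eventually_sequentially)
qed

section \<open>The fundamental lemma of the calculus of variations\<close>

lemma square_integrable_measurable:
  "square_integrable h \<Longrightarrow> h \<in> borel_measurable borel"
  by (simp add: square_integrable_def)

lemma square_integrable_integrable_indicator:
  assumes h: "square_integrable h" and S: "S \<in> sets lborel" "emeasure lborel S < \<infinity>"
  shows "integrable lborel (\<lambda>x. indicator S x * cmod (h x))"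
proof (rule Bochner_Integration.integrable_bound)
  have "integrable lborel (\<lambda>x. indicator S x :: real)"
    using S by (simp add: integrable_indicator_iff less_top[symmetric])
  then show "integrable lborel (\<lambda>x. indicator S x + (cmod (h x))\<^sup>2)"
    using h by (simp add: square_integrable_def)
  show "(\<lambda>x. indicator S x * cmod (h x)) \<in> borel_measurable lborel"
    using square_integrable_measurable[OF h] S by measurable
  have "cmod (h x) \<le> 1 + (cmod (h x))\<^sup>2" for x
  proof -
    have "2 * cmod (h x) \<le> 1 + (cmod (h x))\<^sup>2"
      using zero_le_power2[of "cmod (h x) - 1"] by (simp add: power2_eq_square algebra_simps)
    then show ?thesis
      using norm_ge_zero[of "h x"] by linarith
  qed
  then show "AE x in lborel. norm (indicator S x * cmod (h x)) \<le> norm (indicator S x + (cmod (h x))\<^sup>2)"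
    by (auto simp: indicator_def)
qed

lemma square_integrable_integrable_bounded_indicator:
  assumes "square_integrable h" "bounded S" "S \<in> sets lborel"
  shows "integrable lborel (\<lambda>x. indicator S x * cmod (h x))"
  using assms emeasure_bounded_finite[of S] by (intro square_integrable_integrable_indicator) auto

lemma test_fun_continuous: "test_fun \<phi> \<Longrightarrow> continuous_on UNIV \<phi>"
  unfolding test_fun_def
  by (meson continuous_at_imp_continuous_on differentiable_imp_continuous_within)

lemma test_fun_measurable: "test_fun \<phi> \<Longrightarrow> \<phi> \<in> borel_measurable borel"
  by (intro borel_measurable_continuous_onI test_fun_continuous)

lemma test_fun_bounded:
  assumes "test_fun \<phi>"
  obtains M R where "\<And>x. \<bar>\<phi> x\<bar> \<le> M" "\<And>x. \<phi> x \<noteq> 0 \<Longrightarrow> x \<in> cball 0 R"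
proof -
  obtain R where "\<forall>x\<in>{x. \<phi> x \<noteq> 0}. norm x \<le> R"
    using assms unfolding test_fun_def bounded_iff by blast
  then have R: "\<phi> x \<noteq> 0 \<Longrightarrow> x \<in> cball 0 R" for x
    by simp
  have "compact (\<phi> ` cball 0 R)"
    by (rule compact_continuous_image)
       (auto intro: continuous_on_subset[OF test_fun_continuous[OF assms]])
  then obtain M where M: "\<And>y. y \<in> \<phi> ` cball 0 R \<Longrightarrow> norm y \<le> M"
    using compact_imp_bounded bounded_iff by metis
  have "\<bar>\<phi> x\<bar> \<le> max 0 M" for x
  proof (cases "\<phi> x = 0")
    case False
    then show ?thesis using R M[of "\<phi> x"] by auto
  qed simp
  then show thesis
    using R by (rule that)
qed

lemma square_integrable_integrable_mult_test_fun:
  assumes h: "square_integrable h" and \<phi>: "test_fun \<phi>"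
  shows "integrable lborel (\<lambda>x. h x * of_real (\<phi> x))"
proof -
  obtain M R where M: "\<And>x. \<bar>\<phi> x\<bar> \<le> M" and R: "\<And>x. \<phi> x \<noteq> 0 \<Longrightarrow> x \<in> cball 0 R"
    using test_fun_bounded[OF \<phi>] by blast
  have "integrable lborel (\<lambda>x. M * (indicator (cball 0 R) x * cmod (h x)))"
    using square_integrable_integrable_bounded_indicator[OF h] by simp
  then show ?thesis
  proof (rule Bochner_Integration.integrable_bound)
    show "(\<lambda>x. h x * complex_of_real (\<phi> x)) \<in> borel_measurable lborel"
      using square_integrable_measurable[OF h] test_fun_measurable[OF \<phi>] by measurable
    have "norm (h x * of_real (\<phi> x)) \<le> norm (M * (indicator (cball 0 R) x * cmod (h x)))" for x
    proof (cases "\<phi> x = 0")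
      case False
      then have "x \<in> cball 0 R"
        using R by blast
      then show ?thesis
        using mult_right_mono[OF M[of x] norm_ge_zero[of "h x"]] by (simp add: norm_mult mult.commute)
    qed simp
    then show "AE x in lborel. norm (h x * of_real (\<phi> x)) \<le> norm (M * (indicator (cball 0 R) x * cmod (h x)))"
      by simp
  qed
qed

lemma integral_box_eq_0_if_test_orthogonal:
  assumes h: "square_integrable h"
    and orth: "\<And>\<phi>. test_fun \<phi> \<Longrightarrow> (LINT x|lborel. h x * of_real (\<phi> x)) = 0"
  shows "(LINT x|lborel. h x * indicator (box l u) x) = 0"
proof -
  let ?\<phi> = "\<lambda>n. box_bump (real (Suc n)) l u"
  have "(\<lambda>n. LINT x|lborel. h x * of_real (?\<phi> n x)) \<longlonglongrightarrow> (LINT x|lborel. h x * indicator (box l u) x)"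
  proof (rule integral_dominated_convergence[where w="\<lambda>x. indicator (cbox l u) x * cmod (h x)"])
    show "(\<lambda>x. h x * indicator (box l u) x) \<in> borel_measurable lborel"
      using square_integrable_measurable[OF h] by measurable
    show "(\<lambda>x. h x * of_real (?\<phi> n x)) \<in> borel_measurable lborel" for n
      using square_integrable_measurable[OF h] test_fun_measurable[OF test_fun_box_bump[of "real (Suc n)" l u]]
      by measurable
    show "integrable lborel (\<lambda>x. indicator (cbox l u) x * cmod (h x))"
      using h by (intro square_integrable_integrable_bounded_indicator) auto
    have conv: "(\<lambda>n. complex_of_real (?\<phi> n x)) \<longlonglongrightarrow> indicator (box l u) x" for x
      using tendsto_of_real[OF box_bump_tendsto_indicator] by (simp only: of_real_indicator)
    then show "AE x in lborel. (\<lambda>n. h x * of_real (?\<phi> n x)) \<longlonglongrightarrow> h x * indicator (box l u) x"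
      by (intro AE_I2 tendsto_mult_left conv)
    have "norm (h x * of_real (?\<phi> n x)) \<le> indicator (cbox l u) x * cmod (h x)" for n x
      using box_bump_bounds[of "real (Suc n)" l u x] box_subset_cbox[of l u]
      by (cases "x \<in> box l u") (auto simp: norm_mult mult_left_le box_bump_eq_0)
    then show "AE x in lborel. norm (h x * of_real (?\<phi> n x)) \<le> indicator (cbox l u) x * cmod (h x)" for n
      by simp
  qed
  moreover have "(LINT x|lborel. h x * of_real (?\<phi> n x)) = 0" for n
    by (intro orth test_fun_box_bump) simp
  ultimately show ?thesis
    by (simp add: LIMSEQ_const_iff)
qed

lemma AE_eq_if_nn_integral_box_eq:
  fixes f g :: "'a::euclidean_space \<Rightarrow> ennreal"
  assumes [measurable]: "f \<in> borel_measurable borel" "g \<in> borel_measurable borel"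
    and eq: "\<And>l u. (\<integral>\<^sup>+x\<in>box l u. f x \<partial>lborel) = (\<integral>\<^sup>+x\<in>box l u. g x \<partial>lborel)"
    and fin: "\<And>l u. (\<integral>\<^sup>+x\<in>box l u. f x \<partial>lborel) \<noteq> \<infinity>"
  shows "AE x in lborel. f x = g x"
proof (rule sigma_finite_measure.density_unique[OF sigma_finite_lborel])
  let ?E = "range (\<lambda>(a, b). box a b :: 'a set)"
  let ?A = "\<lambda>n::nat. box (- (real n *\<^sub>R One)) (real n *\<^sub>R One) :: 'a set"
  show "density lborel f = density lborel g"
  proof (rule measure_eqI_generator_eq[where A="?A"])
    show "Int_stable ?E"
      by (auto simp: Int_stable_def box_Int_box)
    show "?E \<subseteq> Pow UNIV" "sets (density lborel f) = sigma_sets UNIV ?E"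
      "sets (density lborel g) = sigma_sets UNIV ?E"
      by (simp_all add: borel_eq_box)
    show "range ?A \<subseteq> ?E" "(\<Union>i. ?A i) = UNIV"
      unfolding UN_box_eq_UNIV by auto
    show "emeasure (density lborel f) (?A i) \<noteq> \<infinity>" for i
      using fin by (simp add: emeasure_density)
    show "emeasure (density lborel f) X = emeasure (density lborel g) X" if "X \<in> ?E" for X
      using that eq by (auto simp: emeasure_density)
  qed
qed auto

lemma AE_eq_0_if_integral_box_eq_0:
  fixes r :: "'a::euclidean_space \<Rightarrow> real"
  assumes [measurable]: "r \<in> borel_measurable borel"
    and int: "\<And>l u. integrable lborel (\<lambda>x. r x * indicator (box l u) x)"
    and zero: "\<And>l u. (LINT x|lborel. r x * indicator (box l u) x) = 0"
  shows "AE x in lborel. r x = 0"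
proof -
  let ?P = "\<lambda>x. ennreal (max 0 (r x))" and ?N = "\<lambda>x. ennreal (max 0 (- r x))"
  have int_parts: "integrable lborel (\<lambda>x. max 0 (r x) * indicator (box l u) x)"
    "integrable lborel (\<lambda>x. max 0 (- r x) * indicator (box l u) x)" for l u
    by (auto intro: Bochner_Integration.integrable_bound[OF int[of l u]] simp: indicator_def)
  have nn_integral_parts:
    "(\<integral>\<^sup>+x\<in>box l u. ?P x \<partial>lborel) = ennreal (LINT x|lborel. max 0 (r x) * indicator (box l u) x)"
    "(\<integral>\<^sup>+x\<in>box l u. ?N x \<partial>lborel) = ennreal (LINT x|lborel. max 0 (- r x) * indicator (box l u) x)"
    for l u
     by (simp_all flip: nn_integral_eq_integral[OF int_parts(1)] nn_integral_eq_integral[OF int_parts(2)])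
        (auto intro!: nn_integral_cong simp: indicator_def)
  have "AE x in lborel. ?P x = ?N x"
  proof (rule AE_eq_if_nn_integral_box_eq)
    fix l u
    have "(LINT x|lborel. max 0 (r x) * indicator (box l u) x) - (LINT x|lborel. max 0 (- r x) * indicator (box l u) x)
        = (LINT x|lborel. r x * indicator (box l u) x)"
      by (simp add: int_parts flip: Bochner_Integration.integral_diff)
         (intro Bochner_Integration.integral_cong; simp add: indicator_def max_def)
    then show "(\<integral>\<^sup>+x\<in>box l u. ?P x \<partial>lborel) = (\<integral>\<^sup>+x\<in>box l u. ?N x \<partial>lborel)"
      using zero[of l u] by (simp add: nn_integral_parts)
  qed (simp_all add: nn_integral_parts)
  then show ?thesis
    by eventually_elim (auto simp: max_def split: if_splits)
qed

lemma AE_eq_0_if_test_orthogonal: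
  assumes h: "square_integrable h"
    and orth: "\<And>\<phi>. test_fun \<phi> \<Longrightarrow> (LINT x|lborel. h x * of_real (\<phi> x)) = 0"
  shows "AE x in lborel. h x = 0"
proof -
  have [measurable]: "h \<in> borel_measurable borel"
    by (rule square_integrable_measurable[OF h])
  have int: "integrable lborel (\<lambda>x. h x * indicator (box l u) x)" for l u
  proof (rule Bochner_Integration.integrable_bound
      [OF square_integrable_integrable_bounded_indicator[OF h, of "box l u"]])
    show "(\<lambda>x. h x * indicator (box l u) x) \<in> borel_measurable lborel"
      by measurable
  qed (auto simp: indicator_def)
  have zero: "(LINT x|lborel. h x * indicator (box l u) x) = 0" for l u
    by (rule integral_box_eq_0_if_test_orthogonal[OF h orth])
  have "AE x in lborel. Re (c * h x) = 0" for c
  proof (rule AE_eq_0_if_integral_box_eq_0)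
    have eq: "(\<lambda>x. Re (c * h x) * indicator (box l u) x) = (\<lambda>x. Re (c * (h x * indicator (box l u) x)))" for l u
      by (auto simp: indicator_def)
    show "integrable lborel (\<lambda>x. Re (c * h x) * indicator (box l u) x)" for l u
      unfolding eq using int by (intro integrable_Re integrable_mult_right)
    show "(LINT x|lborel. Re (c * h x) * indicator (box l u) x) = 0" for l u
      unfolding eq integral_Re[OF integrable_mult_right[OF int]] by (simp add: zero)
  qed measurable
  from this[of 1] this[of "- \<i>"] have "AE x in lborel. Re (h x) = 0 \<and> Im (h x) = 0"
    by (simp add: AE_conj_iff)
  then show ?thesis
    by eventually_elim (simp add: complex_eq_iff)
qed

lemma square_integrable_diff:
  assumes f: "square_integrable f" and g: "square_integrable g"
  shows "square_integrable (\<lambda>x. f x - g x)"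
  unfolding square_integrable_def
proof
  have [measurable]: "f \<in> borel_measurable borel" "g \<in> borel_measurable borel"
    using f g by (auto simp: square_integrable_def)
  show "(\<lambda>x. f x - g x) \<in> borel_measurable lborel"
    by measurable
  have "integrable lborel (\<lambda>x. 2 * (cmod (f x))\<^sup>2 + 2 * (cmod (g x))\<^sup>2)"
    using f g by (auto simp: square_integrable_def)
  then show "integrable lborel (\<lambda>x. (cmod (f x - g x))\<^sup>2)"
  proof (rule Bochner_Integration.integrable_bound)
    show "(\<lambda>x. (cmod (f x - g x))\<^sup>2) \<in> borel_measurable lborel"
      by measurable
    have "(cmod (f x - g x))\<^sup>2 \<le> 2 * (cmod (f x))\<^sup>2 + 2 * (cmod (g x))\<^sup>2" for x
    proof -
      have "(cmod (f x - g x))\<^sup>2 \<le> (cmod (f x) + cmod (g x))\<^sup>2"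
        by (simp add: power_mono norm_triangle_ineq4)
      also have "\<dots> \<le> 2 * (cmod (f x))\<^sup>2 + 2 * (cmod (g x))\<^sup>2"
        using zero_le_power2[of "cmod (f x) - cmod (g x)"] by (simp add: power2_eq_square algebra_simps)
      finally show ?thesis .
    qed
    then show "AE x in lborel. norm ((cmod (f x - g x))\<^sup>2) \<le> norm (2 * (cmod (f x))\<^sup>2 + 2 * (cmod (g x))\<^sup>2)"
      by simp
  qed
qed

lemma weak_deriv_unique:
  assumes g1: "square_integrable g1" and g2: "square_integrable g2"
    and "weak_deriv u b g1" "weak_deriv u b g2"
  shows "AE x in lborel. g1 x = g2 x"
proof -
  have "AE x in lborel. g1 x - g2 x = 0"
  proof (rule AE_eq_0_if_test_orthogonal[OF square_integrable_diff[OF g1 g2]])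
    fix \<phi> :: "'a \<Rightarrow> real"
    assume \<phi>: "test_fun \<phi>"
    then have "(LINT x|lborel. g1 x * of_real (\<phi> x)) = (LINT x|lborel. g2 x * of_real (\<phi> x))"
      using assms(3,4) unfolding weak_deriv_def by (metis minus_equation_iff)
    then show "(LINT x|lborel. (g1 x - g2 x) * of_real (\<phi> x)) = 0"
      using square_integrable_integrable_mult_test_fun[OF g1 \<phi>]
        square_integrable_integrable_mult_test_fun[OF g2 \<phi>]
      by (simp add: left_diff_distrib)
  qed
  then show ?thesis
    by simp
qed

lemma l2norm_sq_cong_AE:
  assumes "square_integrable f" "square_integrable g" "AE x in lborel. f x = g x"
  shows "l2norm_sq f = l2norm_sq g"
  using assms unfolding l2norm_sq_def
  by (intro integral_cong_AE) (auto simp: square_integrable_def elim: AE_mp)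

lemma l2norm_sq_nonneg: "l2norm_sq f \<ge> 0"
  unfolding l2norm_sq_def by (rule integral_nonneg_AE) auto

lemma grad_norm_sq_nonneg: "grad_norm_sq u \<ge> 0"
  unfolding grad_norm_sq_def by (intro sum_nonneg l2norm_sq_nonneg)

lemma weak_partial:
  assumes "square_integrable g" "weak_deriv u b g"
  shows "square_integrable (weak_partial u b)" "weak_deriv u b (weak_partial u b)"
  using someI[of "\<lambda>g. square_integrable g \<and> weak_deriv u b g", OF conjI, OF assms]
  unfolding weak_partial_def by auto

lemma l2norm_sq_weak_partial:
  assumes "square_integrable g" "weak_deriv u b g"
  shows "l2norm_sq (weak_partial u b) = l2norm_sq g"
  using assms weak_partial[OF assms] by (intro l2norm_sq_cong_AE weak_deriv_unique) auto


section \<open>Dilations\<close>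

lemma nn_integral_lborel_affine:
  fixes f :: "'a::euclidean_space \<Rightarrow> ennreal"
  assumes [measurable]: "f \<in> borel_measurable borel" and "c \<noteq> 0"
  shows "(\<integral>\<^sup>+x. f x \<partial>lborel) = ennreal (\<bar>c\<bar> ^ DIM('a)) * (\<integral>\<^sup>+x. f (t + c *\<^sub>R x) \<partial>lborel)"
  by (subst lborel_affine[OF \<open>c \<noteq> 0\<close>, of t])
     (simp add: nn_integral_density nn_integral_distr nn_integral_cmult)

lemma integrable_lborel_scale:
  fixes f :: "'a::euclidean_space \<Rightarrow> 'b::{banach, second_countable_topology}"
  assumes f: "integrable lborel f" and c: "c \<noteq> 0"
  shows "integrable lborel (\<lambda>x. f (c *\<^sub>R x))"
  using f borel_measurable_integrable[OF f] nn_integral_lborel_affine[of "\<lambda>x. ennreal (norm (f x))" c 0]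
  unfolding integrable_iff_bounded by (auto simp: ennreal_mult_less_top c)

lemma integral_lborel_scale:
  fixes f :: "'a::euclidean_space \<Rightarrow> 'b::{banach, second_countable_topology}"
  assumes c: "c \<noteq> 0"
  shows "(\<integral>x. f x \<partial>lborel) = (\<bar>c\<bar> ^ DIM('a)) *\<^sub>R (\<integral>x. f (c *\<^sub>R x) \<partial>lborel)"
proof cases
  assume f: "integrable lborel f"
  then show ?thesis
    using c borel_measurable_integrable[OF f] integrable_lborel_scale[OF f c]
    by (subst lborel_affine[OF c, of 0]) (simp add: integral_density integral_distr)
next
  assume "\<not> integrable lborel f"
  moreover have "\<not> integrable lborel (\<lambda>x. f (c *\<^sub>R x))"
    using integrable_lborel_scale[of "\<lambda>x. f (c *\<^sub>R x)" "1 / c"] c \<open>\<not> integrable lborel f\<close> by auto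
  ultimately show ?thesis
    by (simp add: not_integrable_integral_eq)
qed

definition dilate :: "complex \<Rightarrow> real \<Rightarrow> ('a::euclidean_space \<Rightarrow> complex) \<Rightarrow> 'a \<Rightarrow> complex" where
  "dilate a c f x = a * f (c *\<^sub>R x)"

lemma square_integrable_dilate:
  assumes f: "square_integrable f" and c: "c \<noteq> 0"
  shows "square_integrable (dilate a c f)"
  unfolding square_integrable_def dilate_def
proof
  have [measurable]: "f \<in> borel_measurable borel"
    using f by (rule square_integrable_measurable)
  show "(\<lambda>x. a * f (c *\<^sub>R x)) \<in> borel_measurable lborel"
    by measurable
  have "integrable lborel (\<lambda>x. (cmod (f (c *\<^sub>R x)))\<^sup>2)"
    using f c by (intro integrable_lborel_scale) (auto simp: square_integrable_def)
  then show "integrable lborel (\<lambda>x. (cmod (a * f (c *\<^sub>R x)))\<^sup>2)"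
    by (simp add: norm_mult power_mult_distrib)
qed

lemma l2norm_sq_dilate:
  fixes f :: "'a::euclidean_space \<Rightarrow> complex"
  assumes c: "c \<noteq> 0"
  shows "l2norm_sq (dilate a c f) = (cmod a)\<^sup>2 / \<bar>c\<bar> ^ DIM('a) * l2norm_sq f"
  using c unfolding l2norm_sq_def dilate_def
  by (subst integral_lborel_scale[OF c]) (simp add: norm_mult power_mult_distrib)

lemma has_derivative_test_fun:
  "test_fun \<phi> \<Longrightarrow> (\<phi> has_derivative frechet_derivative \<phi> (at x)) (at x)"
  unfolding test_fun_def using frechet_derivative_works by blast

lemma has_derivative_test_fun_scale:
  assumes "test_fun \<phi>"
  shows "((\<lambda>x. \<phi> (c *\<^sub>R x)) has_derivative (\<lambda>h. frechet_derivative \<phi> (at (c *\<^sub>R x)) (c *\<^sub>R h))) (at x)"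
  by (rule has_derivative_compose[OF _ has_derivative_test_fun[OF assms]])
     (rule derivative_eq_intros refl)+

lemma frechet_derivative_scale:
  assumes "test_fun \<phi>"
  shows "frechet_derivative (\<lambda>x. \<phi> (c *\<^sub>R x)) (at x) b = c * frechet_derivative \<phi> (at (c *\<^sub>R x)) b"
proof -
  note has_derivative_test_fun_scale[OF assms, of c x]
  moreover have "linear (frechet_derivative \<phi> (at (c *\<^sub>R x)))"
    using has_derivative_test_fun[OF assms] has_derivative_linear by blast
  ultimately show ?thesis
    by (simp add: frechet_derivative_at[symmetric] linear_scale)
qed

lemma test_fun_scale:
  assumes \<phi>: "test_fun \<phi>" and c: "c \<noteq> 0"
  shows "test_fun (\<lambda>x. \<phi> (c *\<^sub>R x))"
  unfolding test_fun_def
proof (intro conjI allI ballI)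
  show "(\<lambda>x. \<phi> (c *\<^sub>R x)) differentiable at x" for x
    using has_derivative_test_fun_scale[OF \<phi>] by (auto simp: differentiable_def)
next
  fix b :: 'a
  assume b: "b \<in> Basis"
  have "continuous_on UNIV (\<lambda>y. frechet_derivative \<phi> (at y) b)"
    using \<phi> b unfolding test_fun_def by blast
  then have "continuous_on UNIV (\<lambda>x. frechet_derivative \<phi> (at (c *\<^sub>R x)) b)"
    by (rule continuous_on_compose2) (auto intro: continuous_intros)
  then show "continuous_on UNIV (\<lambda>x. frechet_derivative (\<lambda>x. \<phi> (c *\<^sub>R x)) (at x) b)"
    by (simp add: frechet_derivative_scale[OF \<phi>] continuous_on_mult_left)
next
  obtain R where R: "\<forall>y\<in>{y. \<phi> y \<noteq> 0}. norm y \<le> R"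
    using \<phi> unfolding test_fun_def bounded_iff by blast
  have "norm x \<le> R / \<bar>c\<bar>" if "\<phi> (c *\<^sub>R x) \<noteq> 0" for x
    using R that c by (auto simp: field_simps)
  then show "bounded {x. \<phi> (c *\<^sub>R x) \<noteq> 0}"
    unfolding bounded_iff by blast
qed

text \<open>Substitute \<open>y = c x\<close> in the defining identity of \<open>g\<close>, tested against \<open>\<phi> (y / c)\<close>.\<close>

lemma weak_deriv_dilate:
  fixes u g :: "'a::euclidean_space \<Rightarrow> complex"
  assumes c: "c > 0" and w: "weak_deriv u b g"
  shows "weak_deriv (dilate a c u) b (dilate (a * of_real c) c g)"
  unfolding weak_deriv_def
proof (intro allI impI)
  fix \<phi> :: "'a \<Rightarrow> real"
  assume \<phi>: "test_fun \<phi>"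
  define \<psi> where "\<psi> y = \<phi> ((1 / c) *\<^sub>R y)" for y
  have "test_fun \<psi>"
    unfolding \<psi>_def using \<phi> c by (intro test_fun_scale) auto
  then have "(LINT y|lborel. u y * of_real (frechet_derivative \<psi> (at y) b)) = - (LINT y|lborel. g y * of_real (\<psi> y))"
    using w unfolding weak_deriv_def by blast
  moreover have "(LINT y|lborel. u y * of_real (frechet_derivative \<psi> (at y) b))
      = c ^ DIM('a) *\<^sub>R ((LINT x|lborel. u (c *\<^sub>R x) * of_real (frechet_derivative \<phi> (at x) b)) / of_real c)"
    using c by (subst integral_lborel_scale[of c]) (auto simp: \<psi>_def[abs_def] frechet_derivative_scale[OF \<phi>] ac_simps)
  moreover have "(LINT y|lborel. g y * of_real (\<psi> y)) = c ^ DIM('a) *\<^sub>R (LINT x|lborel. g (c *\<^sub>R x) * of_real (\<phi> x))"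
    using c by (subst integral_lborel_scale[of c]) (auto simp: \<psi>_def)
  ultimately have "(LINT x|lborel. u (c *\<^sub>R x) * of_real (frechet_derivative \<phi> (at x) b)) / of_real c
      = - (LINT x|lborel. g (c *\<^sub>R x) * of_real (\<phi> x))"
    using c by (simp only: scaleR_minus_right[symmetric] scaleR_cancel_left) simp
  then show "(LINT x|lborel. dilate a c u x * of_real (frechet_derivative \<phi> (at x) b)) =
      - (LINT x|lborel. dilate (a * of_real c) c g x * of_real (\<phi> x))"
    using c unfolding dilate_def by (simp add: field_simps mult.assoc)
qed

lemma H1_dilate:
  assumes u: "H1 u" and c: "c > 0"
  shows "H1 (dilate a c u)"
  unfolding H1_def
proof (intro conjI ballI)
  show "square_integrable (dilate a c u)"
    using u c by (simp add: H1_def square_integrable_dilate)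
  fix b :: 'a
  assume "b \<in> Basis"
  then obtain g where "square_integrable g" "weak_deriv u b g"
    using u unfolding H1_def by blast
  then show "\<exists>g. square_integrable g \<and> weak_deriv (dilate a c u) b g"
    using c by (intro exI[of _ "dilate (a * of_real c) c g"]) (simp add: square_integrable_dilate weak_deriv_dilate)
qed

lemma grad_norm_sq_dilate:
  fixes u :: "'a::euclidean_space \<Rightarrow> complex"
  assumes u: "H1 u" and c: "c > 0"
  shows "grad_norm_sq (dilate a c u) = (cmod a)\<^sup>2 * c\<^sup>2 / c ^ DIM('a) * grad_norm_sq u"
proof -
  have "l2norm_sq (weak_partial (dilate a c u) b) = (cmod a)\<^sup>2 * c\<^sup>2 / c ^ DIM('a) * l2norm_sq (weak_partial u b)"
    if b: "b \<in> Basis" for b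
  proof -
    obtain g where "square_integrable g" "weak_deriv u b g"
      using u b unfolding H1_def by blast
    then have g: "square_integrable (weak_partial u b)" "weak_deriv u b (weak_partial u b)"
      by (rule weak_partial)+
    have "l2norm_sq (weak_partial (dilate a c u) b) = l2norm_sq (dilate (a * of_real c) c (weak_partial u b))"
      using g c by (intro l2norm_sq_weak_partial square_integrable_dilate weak_deriv_dilate) auto
    then show ?thesis
      using c by (simp add: l2norm_sq_dilate norm_mult power_mult_distrib)
  qed
  then show ?thesis
    unfolding grad_norm_sq_def by (simp add: sum_distrib_left)
qed

text \<open>Dilating \<open>u\<close> by a small factor while preserving its \<open>L\<^sup>2\<close> norm makes the gradient term arbitrarily small.\<close>

lemma le_offset_if_gradient_inequality:
  fixes u :: "'a::euclidean_space \<Rightarrow> complex"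
  assumes ineq: "\<forall>u :: 'a \<Rightarrow> complex. H1 u \<and> l2norm_sq u = \<beta> \<longrightarrow> l2norm_sq u \<le> grad_norm_sq u / K\<^sup>2 + \<mu>"
    and u: "H1 u" "l2norm_sq u = \<beta>"
  shows "\<beta> \<le> \<mu>"
proof (rule field_le_epsilon)
  fix e :: real
  assume "e > 0"
  define G where "G = grad_norm_sq u / K\<^sup>2"
  have "G \<ge> 0"
    unfolding G_def using grad_norm_sq_nonneg[of u] by simp
  define c where "c = sqrt (e / (G + 1))"
  have "c > 0"
    unfolding c_def using \<open>e > 0\<close> \<open>G \<ge> 0\<close> by simp
  define a where "a = complex_of_real (c powr (DIM('a) / 2))"
  have a: "(cmod a)\<^sup>2 = c ^ DIM('a)"
    using \<open>c > 0\<close> by (simp add: a_def power2_eq_square powr_add[symmetric] powr_realpow)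
  have "H1 (dilate a c u)" "l2norm_sq (dilate a c u) = \<beta>"
    using u \<open>c > 0\<close> a by (simp_all add: H1_dilate l2norm_sq_dilate)
  then have "\<beta> \<le> c\<^sup>2 * G + \<mu>"
    using ineq \<open>c > 0\<close> a by (force simp: grad_norm_sq_dilate[OF u(1)] G_def)
  also have "c\<^sup>2 * G \<le> e"
    using \<open>e > 0\<close> \<open>G \<ge> 0\<close> by (simp add: c_def field_simps)
  finally show "\<beta> \<le> \<mu> + e"
    by simp
qed

section \<open>Fourier transforms of Gaussians\<close>

lemma integrable_gaussian_real:
  assumes e: "(\<epsilon>::real) > 0"
  shows "integrable lborel (\<lambda>t::real. exp (- \<epsilon> * t\<^sup>2))"
proof -
  define c where "c = sqrt (2 * \<epsilon>)"
  have c: "c > 0" "c^2 = 2 * \<epsilon>" using e by (auto simp: c_def)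
  have "integrable lborel (\<lambda>t. std_normal_density (0 + c * t))"
    by (rule lborel_integrable_real_affine) (use c in auto)
  then have i: "integrable lborel (\<lambda>t. sqrt (2 * pi) * std_normal_density (0 + c * t))"
    by (rule Bochner_Integration.integrable_mult_right)
  have eq: "(\<lambda>t. sqrt (2 * pi) * std_normal_density (0 + c * t)) = (\<lambda>t. exp (- \<epsilon> * t\<^sup>2))"
    unfolding std_normal_density_def using c by (simp add: power_mult_distrib)
  show ?thesis using i unfolding eq .
qed

lemma fourier_integral_gaussian_real:
  assumes e: "(\<epsilon>::real) > 0"
  shows "(LINT t|lborel. of_real (exp (- \<epsilon> * t\<^sup>2)) * exp (- \<i> * of_real (t * s)))
       = of_real (sqrt (pi / \<epsilon>) * exp (- s\<^sup>2 / (4 * \<epsilon>)))"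
proof -
  define c where "c = sqrt (2 * \<epsilon>)"
  have c: "c > 0" "c^2 = 2 * \<epsilon>" using e by (auto simp: c_def)
  define \<tau> where "\<tau> = - s / c"
  define I where "I = (LINT t|lborel. of_real (exp (- \<epsilon> * t\<^sup>2)) * exp (- \<i> * of_real (t * s)))"
  have "char std_normal_distribution \<tau> = of_real (exp (- (\<tau>^2) / 2))"
    by (simp add: char_std_normal_distribution)
  moreover have "char std_normal_distribution \<tau> = (LINT x|lborel. std_normal_density x *\<^sub>R iexp (\<tau> * x))"
    unfolding char_def by (subst integral_density) (auto intro!: borel_measurable_continuous_onI continuous_intros)
  moreover have "(LINT x|lborel. std_normal_density x *\<^sub>R iexp (\<tau> * x))
     = c *\<^sub>R (LINT t|lborel. std_normal_density (0 + c * t) *\<^sub>R iexp (\<tau> * (0 + c * t)))"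
    using lborel_integral_real_affine[of c "\<lambda>x. std_normal_density x *\<^sub>R iexp (\<tau> * x)" 0] c by simp
  moreover have "std_normal_density (0 + c * t) *\<^sub>R iexp (\<tau> * (0 + c * t))
     = of_real (1 / sqrt (2 * pi)) * (of_real (exp (- \<epsilon> * t\<^sup>2)) * exp (- \<i> * of_real (t * s)))" for t
  proof -
    have "(c * t)^2 / 2 = \<epsilon> * t^2" using c by (simp add: power_mult_distrib)
    moreover have "\<tau> * (c * t) = - (t * s)" using c by (simp add: \<tau>_def)
    ultimately show ?thesis unfolding std_normal_density_def
      by (simp add: scaleR_conv_of_real algebra_simps)
  qed
  ultimately have "of_real (exp (- (\<tau>^2) / 2)) = c *\<^sub>R (of_real (1 / sqrt (2 * pi)) * I)"
    unfolding I_def by simp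
  then have "I = of_real (sqrt (2 * pi) / c * exp (- (\<tau>^2) / 2))"
    using c by (simp add: scaleR_conv_of_real field_simps)
  moreover have "sqrt (2 * pi) / c = sqrt (pi / \<epsilon>)"
    using e unfolding c_def by (simp add: real_sqrt_divide[symmetric])
  moreover have "\<tau>^2 / 2 = s\<^sup>2 / (4 * \<epsilon>)"
    using c e by (simp add: \<tau>_def power_divide)
  ultimately show ?thesis unfolding I_def by simp
qed

lemma lborel_integral_prod_Basis:
  fixes f :: "'a::euclidean_space \<Rightarrow> real \<Rightarrow> complex"
  assumes int: "\<And>b. b \<in> Basis \<Longrightarrow> integrable lborel (f b)"
  shows "(LINT x|lborel. (\<Prod>b\<in>Basis. f b (x \<bullet> b))) = (\<Prod>b\<in>Basis. (LINT t|lborel. f b t))"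
    and "integrable lborel (\<lambda>x. \<Prod>b\<in>Basis. f b (x \<bullet> b))"
proof -
  interpret P: product_sigma_finite "\<lambda>_::'a. lborel::real measure"
    by (simp add: product_sigma_finite_def sigma_finite_lborel)
  define T where "T y = (\<Sum>b\<in>Basis. y b *\<^sub>R b)" for y :: "'a \<Rightarrow> real"
  have f_measurable[measurable]: "f b \<in> borel_measurable borel" if "b \<in> Basis" for b
    using int[OF that] by (simp add: borel_measurable_integrable)
  have T_measurable[measurable]: "T \<in> measurable (\<Pi>\<^sub>M b\<in>Basis. (lborel::real measure)) borel"
    unfolding T_def[abs_def] by measurable
  have prod_measurable: "(\<lambda>x::'a. \<Prod>b\<in>Basis. f b (x \<bullet> b)) \<in> borel_measurable borel"
    by measurable
  have inner_T: "T y \<bullet> b = y b" if "b \<in> Basis" for y b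
    using that unfolding T_def by (simp add: inner_sum_left inner_Basis if_distrib cong: if_cong)
  have lborel_eq_distr: "lborel = distr (\<Pi>\<^sub>M b\<in>Basis. (lborel::real measure)) borel T"
    unfolding T_def[abs_def] by (rule lborel_eq[where 'a='a])
  have prod_T: "(\<lambda>y. \<Prod>b\<in>Basis. f b (T y \<bullet> b)) = (\<lambda>y. \<Prod>b\<in>Basis. f b (y b))"
    by (rule ext, rule prod.cong) (auto simp: inner_T)
  have "(LINT x|lborel. (\<Prod>b\<in>Basis. f b (x \<bullet> b))) = (\<integral>y. (\<Prod>b\<in>Basis. f b (T y \<bullet> b)) \<partial>(\<Pi>\<^sub>M b\<in>Basis. (lborel::real measure)))"
    by (subst lborel_eq_distr) (rule integral_distr[OF T_measurable prod_measurable])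
  also have "\<dots> = (\<integral>y. (\<Prod>b\<in>Basis. f b (y b)) \<partial>(\<Pi>\<^sub>M b\<in>Basis. (lborel::real measure)))"
    unfolding prod_T ..
  also have "\<dots> = (\<Prod>b\<in>Basis. (LINT t|lborel. f b t))"
    by (rule P.product_integral_prod) (auto intro: int)
  finally show "(LINT x|lborel. (\<Prod>b\<in>Basis. f b (x \<bullet> b))) = (\<Prod>b\<in>Basis. (LINT t|lborel. f b t))" .
  have "integrable (\<Pi>\<^sub>M b\<in>Basis. (lborel::real measure)) (\<lambda>y. \<Prod>b\<in>Basis. f b (y b))"
    by (rule P.product_integrable_prod) (auto intro: int)
  then have "integrable (\<Pi>\<^sub>M b\<in>Basis. (lborel::real measure)) (\<lambda>y. \<Prod>b\<in>Basis. f b (T y \<bullet> b))"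
    unfolding prod_T .
  then have "integrable (distr (\<Pi>\<^sub>M b\<in>Basis. (lborel::real measure)) borel T) (\<lambda>x::'a. \<Prod>b\<in>Basis. f b (x \<bullet> b))"
    by (subst integrable_distr_eq[OF T_measurable prod_measurable]) (simp add: comp_def)
  then show "integrable lborel (\<lambda>x. \<Prod>b\<in>Basis. f b (x \<bullet> b))" by (simp flip: lborel_eq_distr)
qed

lemma power2_norm_eq_sum_Basis: "(norm x)\<^sup>2 = (\<Sum>b\<in>Basis. (x \<bullet> b)\<^sup>2)"
  by (simp only: power2_norm_eq_inner euclidean_inner[of x x]) (simp add: power2_eq_square)

lemma prod_Basis_gaussian_mult_fourier_kernel:
  fixes x z :: "'a::euclidean_space"
  shows "(\<Prod>b\<in>Basis. of_real (exp (- \<epsilon> * (x \<bullet> b)\<^sup>2)) * exp (- \<i> * of_real ((x \<bullet> b) * (z \<bullet> b))))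
     = of_real (exp (- \<epsilon> * (norm x)\<^sup>2)) * exp (- \<i> * of_real (x \<bullet> z))"
proof -
  have "(\<Prod>b\<in>Basis. of_real (exp (- \<epsilon> * (x \<bullet> b)\<^sup>2))) = (of_real (exp (- \<epsilon> * (norm x)\<^sup>2)) :: complex)"
    unfolding power2_norm_eq_sum_Basis[of x] by (simp add: exp_sum sum_distrib_left sum_negf[symmetric] of_real_prod)
  moreover have "(\<Prod>b\<in>Basis. exp (- \<i> * of_real ((x \<bullet> b) * (z \<bullet> b)))) = exp (- \<i> * of_real (x \<bullet> z))"
    unfolding euclidean_inner[of x z] by (simp add: exp_sum[symmetric] sum_distrib_left sum_negf of_real_sum)
  ultimately show ?thesis
    by (simp add: prod.distrib)
qed

lemma fourier_integral_gaussian: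
  fixes z :: "'a::euclidean_space"
  assumes e: "(\<epsilon>::real) > 0"
  shows "(LINT x|lborel. of_real (exp (- \<epsilon> * (norm x)\<^sup>2)) * exp (- \<i> * of_real (x \<bullet> z)))
       = of_real (sqrt (pi / \<epsilon>) ^ DIM('a) * exp (- (norm z)\<^sup>2 / (4 * \<epsilon>)))"
    and "integrable lborel (\<lambda>x::'a. of_real (exp (- \<epsilon> * (norm x)\<^sup>2)) * exp (- \<i> * of_real (x \<bullet> z)))"
proof -
  define f where "f b t = of_real (exp (- \<epsilon> * t\<^sup>2)) * exp (- \<i> * of_real (t * (z \<bullet> b)))" for b :: 'a and t :: real
  have int: "integrable lborel (f b)" for b
    unfolding f_def[abs_def]
    by (rule Bochner_Integration.integrable_bound[OF integrable_gaussian_real[OF e]])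
       (auto simp: norm_mult intro!: borel_measurable_continuous_onI continuous_intros)
  have eq: "(\<Prod>b\<in>Basis. f b (x \<bullet> b)) = of_real (exp (- \<epsilon> * (norm x)\<^sup>2)) * exp (- \<i> * of_real (x \<bullet> z))" for x
    unfolding f_def by (rule prod_Basis_gaussian_mult_fourier_kernel)
  have "(LINT x|lborel. (\<Prod>b\<in>Basis. f b (x \<bullet> b))) = (\<Prod>b\<in>Basis. (LINT t|lborel. f b t))"
    by (rule lborel_integral_prod_Basis(1)[OF int])
  also have "\<dots> = (\<Prod>b\<in>Basis. of_real (sqrt (pi / \<epsilon>) * exp (- (z \<bullet> b)\<^sup>2 / (4 * \<epsilon>))))"
    unfolding f_def by (intro prod.cong refl fourier_integral_gaussian_real[OF e])
  also have "\<dots> = of_real (sqrt (pi / \<epsilon>) ^ DIM('a) * exp (- (norm z)\<^sup>2 / (4 * \<epsilon>)))"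
    unfolding power2_norm_eq_sum_Basis[of z]
    by (simp add: of_real_prod[symmetric] prod.distrib exp_sum[symmetric] sum_divide_distrib sum_negf)
  finally show "(LINT x|lborel. of_real (exp (- \<epsilon> * (norm x)\<^sup>2)) * exp (- \<i> * of_real (x \<bullet> z)))
       = of_real (sqrt (pi / \<epsilon>) ^ DIM('a) * exp (- (norm z)\<^sup>2 / (4 * \<epsilon>)))"
    unfolding eq .
  show "integrable lborel (\<lambda>x::'a. of_real (exp (- \<epsilon> * (norm x)\<^sup>2)) * exp (- \<i> * of_real (x \<bullet> z)))"
    using lborel_integral_prod_Basis(2)[of f, OF int] unfolding eq .
qed

lemma integrable_gaussian:
  assumes "(\<epsilon>::real) > 0"
  shows "integrable lborel (\<lambda>x::'a::euclidean_space. exp (- \<epsilon> * (norm x)\<^sup>2))"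
  using integrable_norm[OF fourier_integral_gaussian(2)[OF assms, of 0]] by (simp add: norm_mult)

abbreviation fourier_kernel :: "'a::euclidean_space \<Rightarrow> 'a \<Rightarrow> complex" where
  "fourier_kernel y \<xi> \<equiv> exp (- \<i> * of_real (y \<bullet> \<xi>))"

lemma norm_fourier_kernel [simp]: "norm (fourier_kernel y \<xi>) = 1"
  by (simp add: norm_exp_i_times[of "- (y \<bullet> \<xi>)", simplified])

lemma fourier_kernel_measurable [measurable]:
  "(\<lambda>(y::'a::euclidean_space, \<xi>). fourier_kernel y \<xi>) \<in> borel_measurable borel"
  by (intro borel_measurable_continuous_onI) (auto intro!: continuous_intros simp: case_prod_beta)

definition fourier_const :: "'a::euclidean_space itself \<Rightarrow> real" where
  "fourier_const _ = (2 * pi) powr (- real DIM('a))"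

lemma fourier_const_pos: "fourier_const TYPE('a::euclidean_space) > 0"
  unfolding fourier_const_def by simp

lemma fourier_const_mult: "fourier_const TYPE('a::euclidean_space) * (2 * pi) ^ DIM('a) = 1"
  unfolding fourier_const_def by (simp add: powr_minus powr_realpow field_simps)

lemma fourier_const_le_1: "fourier_const TYPE('a::euclidean_space) \<le> 1"
proof -
  have "1 \<le> (2 * pi) powr real DIM('a)"
    using pi_gt3 by (intro ge_one_powr_ge_zero) auto
  then show ?thesis
    unfolding fourier_const_def by (simp add: powr_minus field_simps)
qed

definition fourier_integral :: "('a::euclidean_space \<Rightarrow> complex) \<Rightarrow> 'a \<Rightarrow> complex" where
  "fourier_integral w \<xi> = (LINT y|lborel. fourier_kernel y \<xi> * w y)"

lemma fourier_L1_eq: "fourier_L1 w = (\<lambda>\<xi>. of_real (fourier_const TYPE('a)) * fourier_integral w \<xi>)"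
  for w :: "'a::euclidean_space \<Rightarrow> complex"
  unfolding fourier_L1_def fourier_integral_def fourier_const_def by (simp add: fun_eq_iff)

lemma fourier_integral_measurable [measurable]:
  fixes w :: "'a::euclidean_space \<Rightarrow> complex"
  assumes [measurable]: "w \<in> borel_measurable borel"
  shows "fourier_integral w \<in> borel_measurable borel"
  unfolding fourier_integral_def[abs_def] by measurable

lemma fourier_L1_measurable [measurable]:
  fixes w :: "'a::euclidean_space \<Rightarrow> complex"
  assumes [measurable]: "w \<in> borel_measurable borel"
  shows "fourier_L1 w \<in> borel_measurable borel"
  unfolding fourier_L1_eq by measurable

lemma norm_fourier_integral_le: "norm (fourier_integral w \<xi>) \<le> (LINT y|lborel. norm (w y))"
  using integral_norm_bound[of lborel "\<lambda>y. fourier_kernel y \<xi> * w y"]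
  unfolding fourier_integral_def by (simp add: norm_mult)

lemma integral_mult_fourier_integral_swap:
  fixes \<phi> \<psi> :: "'a::euclidean_space \<Rightarrow> complex"
  assumes \<phi>: "integrable lborel \<phi>" and \<psi>: "integrable lborel \<psi>"
  shows "(LINT \<xi>|lborel. \<phi> \<xi> * fourier_integral \<psi> \<xi>) = (LINT y|lborel. \<psi> y * fourier_integral \<phi> y)"
proof -
  have [measurable]: "\<phi> \<in> borel_measurable borel" "\<psi> \<in> borel_measurable borel"
    using \<phi> \<psi> by (auto dest: borel_measurable_integrable)
  define f where "f \<xi> y = \<phi> \<xi> * (fourier_kernel y \<xi> * \<psi> y)" for \<xi> y
  have f_measurable: "case_prod f \<in> borel_measurable (lborel \<Otimes>\<^sub>M lborel)"
    unfolding f_def[abs_def] by measurable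
  have "integrable (lborel \<Otimes>\<^sub>M lborel) (case_prod f)"
  proof (rule lborel_pair.Fubini_integrable[OF f_measurable])
    have "(\<lambda>\<xi>. LINT y|lborel. norm (f \<xi> y)) = (\<lambda>\<xi>. norm (\<phi> \<xi>) * (LINT y|lborel. norm (\<psi> y)))"
      unfolding f_def by (simp add: norm_mult)
    then show "integrable lborel (\<lambda>\<xi>. LINT y|lborel. norm (case_prod f (\<xi>, y)))"
      using \<phi> by simp
    have "integrable lborel (\<lambda>y. fourier_kernel y \<xi> * \<psi> y)" for \<xi>
      by (rule Bochner_Integration.integrable_bound[OF integrable_norm[OF \<psi>]]) (auto simp: norm_mult)
    then show "AE \<xi> in lborel. integrable lborel (\<lambda>y. case_prod f (\<xi>, y))"
      unfolding f_def by simp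
  qed
  then have "(LINT \<xi>|lborel. (LINT y|lborel. f \<xi> y)) = (LINT y|lborel. (LINT \<xi>|lborel. f \<xi> y))"
    by (rule lborel_pair.Fubini_integral[symmetric])
  then show ?thesis
    unfolding f_def fourier_integral_def by (simp add: inner_commute ac_simps flip: integral_mult_right_zero)
qed

section \<open>A Plancherel inequality\<close>

text \<open>The Fourier integral of the Gaussian \<open>exp (- \<epsilon> \<bar>\<xi>\<bar>\<^sup>2)\<close>, see \<open>fourier_integral_gaussian\<close>.\<close>

definition gaussian_ft :: "real \<Rightarrow> 'a::euclidean_space \<Rightarrow> real" where
  "gaussian_ft \<epsilon> z = sqrt (pi / \<epsilon>) ^ DIM('a) * exp (- (norm z)\<^sup>2 / (4 * \<epsilon>))"

lemma gaussian_ft_nonneg: "\<epsilon> > 0 \<Longrightarrow> gaussian_ft \<epsilon> z \<ge> 0"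
  unfolding gaussian_ft_def by simp

lemma gaussian_ft_measurable [measurable]: "gaussian_ft \<epsilon> \<in> borel_measurable borel"
  unfolding gaussian_ft_def[abs_def] by measurable

lemma nn_integral_gaussian_ft:
  assumes "\<epsilon> > 0"
  shows "(\<integral>\<^sup>+z. ennreal (gaussian_ft \<epsilon> (z::'a::euclidean_space)) \<partial>lborel) = ennreal ((2 * pi) ^ DIM('a))"
proof -
  define \<epsilon>' where "\<epsilon>' = 1 / (4 * \<epsilon>)"
  have "\<epsilon>' > 0"
    using assms by (simp add: \<epsilon>'_def)
  have gaussian_ft_eq: "gaussian_ft \<epsilon> = (\<lambda>z::'a. sqrt (pi / \<epsilon>) ^ DIM('a) * exp (- \<epsilon>' * (norm z)\<^sup>2))"
    unfolding gaussian_ft_def \<epsilon>'_def by (simp add: fun_eq_iff)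
  have "complex_of_real (LINT x|lborel. exp (- \<epsilon>' * (norm (x::'a))\<^sup>2))
      = of_real (sqrt (pi / \<epsilon>') ^ DIM('a) * exp (- (norm (0::'a))\<^sup>2 / (4 * \<epsilon>')))"
    using fourier_integral_gaussian(1)[OF \<open>\<epsilon>' > 0\<close>, of 0] by simp
  then have "(LINT z|lborel. gaussian_ft \<epsilon> (z::'a)) = (sqrt (pi / \<epsilon>) * sqrt (pi / \<epsilon>')) ^ DIM('a)"
    unfolding gaussian_ft_eq of_real_eq_iff by (simp add: power_mult_distrib)
  also have "sqrt (pi / \<epsilon>) * sqrt (pi / \<epsilon>') = sqrt ((2 * pi)\<^sup>2)"
    using assms by (simp add: \<epsilon>'_def real_sqrt_mult[symmetric] power2_eq_square field_simps)
  also have "\<dots> = 2 * pi"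
    by (simp add: real_sqrt_mult)
  finally show ?thesis
    using integrable_gaussian[OF \<open>\<epsilon>' > 0\<close>, where 'a='a] assms
    by (subst nn_integral_eq_integral) (auto simp: gaussian_ft_eq)
qed

lemma nn_integral_lborel_translate:
  fixes f :: "'a::euclidean_space \<Rightarrow> ennreal"
  assumes [measurable]: "f \<in> borel_measurable borel"
  shows "(\<integral>\<^sup>+x. f (x - y) \<partial>lborel) = (\<integral>\<^sup>+z. f z \<partial>lborel)"
    and "(\<integral>\<^sup>+y. f (x - y) \<partial>lborel) = (\<integral>\<^sup>+z. f z \<partial>lborel)"
  using nn_integral_lborel_affine[of f 1 "- y"] nn_integral_lborel_affine[of f "- 1" x] by simp_all

text \<open>Schur's test for a translation-invariant kernel, via \<open>2 \<bar>a\<bar> \<bar>b\<bar> \<le> \<bar>a\<bar>\<^sup>2 + \<bar>b\<bar>\<^sup>2\<close>.\<close>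

lemma nn_integral_translation_kernel_le:
  fixes w :: "'a::euclidean_space \<Rightarrow> complex"
  assumes [measurable]: "w \<in> borel_measurable borel" "k \<in> borel_measurable borel"
    and k_nonneg: "\<And>z. k z \<ge> 0" and k_integral: "(\<integral>\<^sup>+z. ennreal (k z) \<partial>lborel) = C"
  shows "(\<integral>\<^sup>+y. ennreal (cmod (w y)) * (\<integral>\<^sup>+x. ennreal (cmod (w x) * k (x - y)) \<partial>lborel) \<partial>lborel)
     \<le> C * (\<integral>\<^sup>+x. ennreal ((cmod (w x))\<^sup>2) \<partial>lborel)"
proof -
  have k_translate: "(\<integral>\<^sup>+x. ennreal (k (x - y)) \<partial>lborel) = C" "(\<integral>\<^sup>+y. ennreal (k (x - y)) \<partial>lborel) = C"
    for x y
    using nn_integral_lborel_translate[of "\<lambda>z. ennreal (k z)"] k_integral by simp_all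
  define p where "p x = ennreal ((cmod (w x))\<^sup>2 / 2)" for x
  have p_measurable [measurable]: "p \<in> borel_measurable borel"
    unfolding p_def[abs_def] by measurable
  have "(\<integral>\<^sup>+y. ennreal (cmod (w y)) * (\<integral>\<^sup>+x. ennreal (cmod (w x) * k (x - y)) \<partial>lborel) \<partial>lborel)
      = (\<integral>\<^sup>+y. (\<integral>\<^sup>+x. ennreal (cmod (w y)) * ennreal (cmod (w x) * k (x - y)) \<partial>lborel) \<partial>lborel)"
    by (subst nn_integral_cmult) auto
  also have "\<dots> \<le> (\<integral>\<^sup>+y. (\<integral>\<^sup>+x. p y * ennreal (k (x - y)) + p x * ennreal (k (x - y)) \<partial>lborel) \<partial>lborel)"
  proof (intro nn_integral_mono)
    fix x y
    have "cmod (w y) * cmod (w x) \<le> (cmod (w y))\<^sup>2 / 2 + (cmod (w x))\<^sup>2 / 2"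
      using zero_le_power2[of "cmod (w y) - cmod (w x)"] by (simp add: power2_eq_square algebra_simps)
    then have "cmod (w y) * cmod (w x) * k (x - y) \<le> ((cmod (w y))\<^sup>2 / 2 + (cmod (w x))\<^sup>2 / 2) * k (x - y)"
      using k_nonneg by (rule mult_right_mono)
    then show "ennreal (cmod (w y)) * ennreal (cmod (w x) * k (x - y))
        \<le> p y * ennreal (k (x - y)) + p x * ennreal (k (x - y))"
      unfolding p_def using k_nonneg
      by (simp add: ennreal_mult[symmetric] ennreal_plus[symmetric] distrib_right mult.assoc del: ennreal_plus)
  qed
  also have "\<dots> = (\<integral>\<^sup>+y. p y * (\<integral>\<^sup>+x. ennreal (k (x - y)) \<partial>lborel) \<partial>lborel)
      + (\<integral>\<^sup>+x. p x * (\<integral>\<^sup>+y. ennreal (k (x - y)) \<partial>lborel) \<partial>lborel)"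
    by (simp add: nn_integral_add nn_integral_cmult lborel_pair.Fubini'[of "\<lambda>x y. p x * ennreal (k (x - y))"])
  also have "\<dots> = C * ((\<integral>\<^sup>+x. p x \<partial>lborel) + (\<integral>\<^sup>+x. p x \<partial>lborel))"
    using nn_integral_multc[of p lborel C] p_measurable by (simp add: k_translate distrib_left mult.commute)
  also have "(\<integral>\<^sup>+x. p x \<partial>lborel) + (\<integral>\<^sup>+x. p x \<partial>lborel) = (\<integral>\<^sup>+x. ennreal ((cmod (w x))\<^sup>2) \<partial>lborel)"
    by (simp add: p_def nn_integral_add[symmetric] ennreal_plus[symmetric] del: ennreal_plus)
  finally show ?thesis .
qed

lemma integrable_mult_fourier_integral:
  fixes w :: "'a::euclidean_space \<Rightarrow> complex"
  assumes h: "integrable lborel h" and [measurable]: "w \<in> borel_measurable borel"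
  shows "integrable lborel (\<lambda>\<xi>. of_real (h \<xi>) * fourier_integral w \<xi>)"
proof -
  let ?M = "LINT y|lborel. norm (w y)"
  have [measurable]: "h \<in> borel_measurable borel"
    using h by (simp add: borel_measurable_integrable)
  have "integrable lborel (\<lambda>\<xi>. ?M * h \<xi>)"
    using h by simp
  then show ?thesis
  proof (rule Bochner_Integration.integrable_bound)
    show "(\<lambda>\<xi>. complex_of_real (h \<xi>) * fourier_integral w \<xi>) \<in> borel_measurable lborel"
      by measurable
    have "norm (of_real (h \<xi>) * fourier_integral w \<xi>) \<le> norm (?M * h \<xi>)" for \<xi>
      using mult_left_mono[OF norm_fourier_integral_le[of w \<xi>] abs_ge_zero[of "h \<xi>"]]
      by (simp add: norm_mult abs_mult mult.commute)
    then show "AE \<xi> in lborel. norm (of_real (h \<xi>) * fourier_integral w \<xi>) \<le> norm (?M * h \<xi>)"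
      by simp
  qed
qed

lemma integral_gaussian_mult_fourier_integral:
  fixes w :: "'a::euclidean_space \<Rightarrow> complex"
  assumes e: "\<epsilon> > 0" and w: "integrable lborel w"
  shows "(LINT \<xi>|lborel. of_real (exp (- \<epsilon> * (norm \<xi>)\<^sup>2)) * fourier_kernel (- y) \<xi> * fourier_integral w \<xi>)
     = (LINT x|lborel. w x * of_real (gaussian_ft \<epsilon> (x - y)))"
proof -
  define \<phi> where "\<phi> \<xi> = of_real (exp (- \<epsilon> * (norm \<xi>)\<^sup>2)) * fourier_kernel (- y) \<xi>" for \<xi> :: 'a
  have "integrable lborel \<phi>"
    unfolding \<phi>_def
    by (rule Bochner_Integration.integrable_bound[OF integrable_gaussian[OF e]]) (auto simp: norm_mult)
  then have "(LINT \<xi>|lborel. \<phi> \<xi> * fourier_integral w \<xi>) = (LINT x|lborel. w x * fourier_integral \<phi> x)"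
    using w by (rule integral_mult_fourier_integral_swap)
  moreover have "fourier_integral \<phi> x = of_real (gaussian_ft \<epsilon> (x - y))" for x
  proof -
    have "fourier_integral \<phi> x
        = (LINT \<xi>|lborel. of_real (exp (- \<epsilon> * (norm \<xi>)\<^sup>2)) * fourier_kernel \<xi> (x - y))"
      unfolding fourier_integral_def \<phi>_def by (intro Bochner_Integration.integral_cong refl)
        (simp add: exp_add[symmetric] inner_diff_right inner_commute algebra_simps)
    also have "\<dots> = of_real (gaussian_ft \<epsilon> (x - y))"
      unfolding gaussian_ft_def by (rule fourier_integral_gaussian(1)[OF e])
    finally show ?thesis .
  qed
  ultimately show ?thesis
    unfolding \<phi>_def by simp
qed

text \<open>Parseval's identity with a Gaussian weight: Fubini moves the Fourier transform onto the weight.\<close>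

lemma integral_gaussian_mult_fourier_integral_sq:
  fixes w :: "'a::euclidean_space \<Rightarrow> complex"
  assumes e: "\<epsilon> > 0" and w: "integrable lborel w"
  shows "(LINT \<xi>|lborel. of_real (exp (- \<epsilon> * (norm \<xi>)\<^sup>2)) * cnj (fourier_integral w \<xi>) * fourier_integral w \<xi>)
     = (LINT y|lborel. w y * (LINT x|lborel. cnj (w x) * of_real (gaussian_ft \<epsilon> (x - y))))"
proof -
  have w_measurable [measurable]: "w \<in> borel_measurable borel"
    using w by (simp add: borel_measurable_integrable)
  define \<phi> where "\<phi> \<xi> = of_real (exp (- \<epsilon> * (norm \<xi>)\<^sup>2)) * cnj (fourier_integral w \<xi>)" for \<xi> :: 'a
  have "integrable lborel \<phi>"
    using integrable_cnj[OF integrable_mult_fourier_integral[OF integrable_gaussian[OF e] w_measurable]]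
    unfolding \<phi>_def by simp
  then have "(LINT \<xi>|lborel. \<phi> \<xi> * fourier_integral w \<xi>) = (LINT y|lborel. w y * fourier_integral \<phi> y)"
    using w by (rule integral_mult_fourier_integral_swap)
  moreover have "fourier_integral \<phi> y = (LINT x|lborel. cnj (w x) * of_real (gaussian_ft \<epsilon> (x - y)))" for y
  proof -
    have "fourier_integral \<phi> y
        = cnj (LINT \<xi>|lborel. of_real (exp (- \<epsilon> * (norm \<xi>)\<^sup>2)) * fourier_kernel (- y) \<xi> * fourier_integral w \<xi>)"
      unfolding fourier_integral_def[of \<phi>] \<phi>_def
      by (subst Bochner_Integration.integral_cnj[symmetric], intro Bochner_Integration.integral_cong refl)
         (simp add: exp_cnj inner_commute)
    also have "\<dots> = cnj (LINT x|lborel. w x * of_real (gaussian_ft \<epsilon> (x - y)))"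
      by (simp only: integral_gaussian_mult_fourier_integral[OF e w])
    finally show ?thesis
      by (simp flip: Bochner_Integration.integral_cnj)
  qed
  ultimately show ?thesis
    unfolding \<phi>_def by simp
qed

lemma norm_integral_le_nn_integral:
  fixes f :: "'b \<Rightarrow> 'c::{banach, second_countable_topology}"
  shows "ennreal (norm (integral\<^sup>L M f)) \<le> (\<integral>\<^sup>+x. ennreal (norm (f x)) \<partial>M)"
  by (cases "integrable M f") (simp_all add: integral_norm_bound_ennreal not_integrable_integral_eq)

lemma norm_integral_mult_sq_le:
  fixes f g :: "'b \<Rightarrow> complex"
  assumes [measurable]: "f \<in> borel_measurable M" "g \<in> borel_measurable M"
  shows "(ennreal (norm (LINT x|M. f x * g x)))\<^sup>2
     \<le> (\<integral>\<^sup>+x. ennreal ((cmod (f x))\<^sup>2) \<partial>M) * (\<integral>\<^sup>+x. ennreal ((cmod (g x))\<^sup>2) \<partial>M)"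
proof -
  have "ennreal (norm (LINT x|M. f x * g x)) \<le> (\<integral>\<^sup>+x. ennreal (cmod (f x)) * ennreal (cmod (g x)) \<partial>M)"
    using norm_integral_le_nn_integral[of M "\<lambda>x. f x * g x"] by (simp add: norm_mult ennreal_mult)
  then have "(ennreal (norm (LINT x|M. f x * g x)))\<^sup>2
      \<le> (\<integral>\<^sup>+x. (ennreal (cmod (f x)))\<^sup>2 \<partial>M) * (\<integral>\<^sup>+x. (ennreal (cmod (g x)))\<^sup>2 \<partial>M)"
    by (rule order_trans[OF power_mono Cauchy_Schwarz_nn_integral]) auto
  then show ?thesis
    by (simp add: ennreal_power)
qed

lemma nn_integral_gaussian_mult_fourier_integral_sq:
  fixes w :: "'a::euclidean_space \<Rightarrow> complex"
  assumes w: "integrable lborel w" and e: "\<epsilon> > 0"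
  shows "(\<integral>\<^sup>+\<xi>. ennreal (exp (- \<epsilon> * (norm \<xi>)\<^sup>2) * (cmod (fourier_integral w \<xi>))\<^sup>2) \<partial>lborel)
     = ennreal (norm (LINT y|lborel. w y * (LINT x|lborel. cnj (w x) * of_real (gaussian_ft \<epsilon> (x - y)))))"
proof -
  let ?g = "\<lambda>\<xi>::'a. exp (- \<epsilon> * (norm \<xi>)\<^sup>2)"
  let ?I = "fourier_integral w"
  let ?M = "LINT y|lborel. norm (w y)"
  have [measurable]: "w \<in> borel_measurable borel"
    using w by (simp add: borel_measurable_integrable)
  have int: "integrable lborel (\<lambda>\<xi>. ?g \<xi> * (cmod (?I \<xi>))\<^sup>2)"
  proof (rule Bochner_Integration.integrable_bound)
    show "integrable lborel (\<lambda>\<xi>. ?M\<^sup>2 * ?g \<xi>)"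
      using integrable_gaussian[OF e, where 'a='a] by simp
    show "(\<lambda>\<xi>. ?g \<xi> * (cmod (?I \<xi>))\<^sup>2) \<in> borel_measurable lborel"
      by measurable
    have "(cmod (?I \<xi>))\<^sup>2 \<le> ?M\<^sup>2" for \<xi>
      using norm_fourier_integral_le[of w \<xi>] by (intro power_mono) auto
    then show "AE \<xi> in lborel. norm (?g \<xi> * (cmod (?I \<xi>))\<^sup>2) \<le> norm (?M\<^sup>2 * ?g \<xi>)"
      by (simp add: mult.commute mult_left_mono)
  qed
  have "complex_of_real (LINT \<xi>|lborel. ?g \<xi> * (cmod (?I \<xi>))\<^sup>2)
      = (LINT \<xi>|lborel. of_real (?g \<xi>) * cnj (?I \<xi>) * ?I \<xi>)" (is "of_real ?J = _")
    by (subst Bochner_Integration.integral_of_real[OF int, symmetric])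
       (intro Bochner_Integration.integral_cong refl, simp only: of_real_mult complex_norm_square mult_ac)
  then have "norm (complex_of_real ?J)
      = norm (LINT y|lborel. w y * (LINT x|lborel. cnj (w x) * of_real (gaussian_ft \<epsilon> (x - y))))"
    unfolding integral_gaussian_mult_fourier_integral_sq[OF e w] by simp
  moreover have "?J \<ge> 0"
    by (intro integral_nonneg_AE) auto
  ultimately show ?thesis
    by (subst nn_integral_eq_integral[OF int]) auto
qed

lemma nn_integral_gaussian_mult_fourier_integral_sq_le:
  fixes w :: "'a::euclidean_space \<Rightarrow> complex"
  assumes w: "integrable lborel w" and e: "\<epsilon> > 0"
  shows "(\<integral>\<^sup>+\<xi>. ennreal (exp (- \<epsilon> * (norm \<xi>)\<^sup>2) * (cmod (fourier_integral w \<xi>))\<^sup>2) \<partial>lborel)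
     \<le> ennreal ((2 * pi) ^ DIM('a)) * (\<integral>\<^sup>+x. ennreal ((cmod (w x))\<^sup>2) \<partial>lborel)"
proof -
  have [measurable]: "w \<in> borel_measurable borel"
    using w by (simp add: borel_measurable_integrable)
  have inner: "ennreal (norm (LINT x|lborel. cnj (w x) * of_real (gaussian_ft \<epsilon> (x - y))))
      \<le> (\<integral>\<^sup>+x. ennreal (cmod (w x) * gaussian_ft \<epsilon> (x - y)) \<partial>lborel)" for y
    using norm_integral_le_nn_integral[of lborel "\<lambda>x. cnj (w x) * of_real (gaussian_ft \<epsilon> (x - y))"]
    by (simp add: norm_mult abs_of_nonneg[OF gaussian_ft_nonneg[OF e]])
  have "(\<integral>\<^sup>+\<xi>. ennreal (exp (- \<epsilon> * (norm \<xi>)\<^sup>2) * (cmod (fourier_integral w \<xi>))\<^sup>2) \<partial>lborel)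
      \<le> (\<integral>\<^sup>+y. ennreal (cmod (w y)) * (\<integral>\<^sup>+x. ennreal (cmod (w x) * gaussian_ft \<epsilon> (x - y)) \<partial>lborel) \<partial>lborel)"
    unfolding nn_integral_gaussian_mult_fourier_integral_sq[OF w e]
    by (intro order_trans[OF norm_integral_le_nn_integral] nn_integral_mono)
       (simp add: norm_mult ennreal_mult mult_left_mono inner)
  also have "\<dots> \<le> ennreal ((2 * pi) ^ DIM('a)) * (\<integral>\<^sup>+x. ennreal ((cmod (w x))\<^sup>2) \<partial>lborel)"
    using gaussian_ft_nonneg[OF e] nn_integral_gaussian_ft[OF e]
    by (intro nn_integral_translation_kernel_le) auto
  finally show ?thesis .
qed

text \<open>Let the Gaussian weight tend to 1 by monotone convergence.\<close>

lemma nn_integral_fourier_integral_sq_le: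
  fixes w :: "'a::euclidean_space \<Rightarrow> complex"
  assumes w: "integrable lborel w"
  shows "(\<integral>\<^sup>+\<xi>. ennreal ((cmod (fourier_integral w \<xi>))\<^sup>2) \<partial>lborel)
     \<le> ennreal ((2 * pi) ^ DIM('a)) * (\<integral>\<^sup>+x. ennreal ((cmod (w x))\<^sup>2) \<partial>lborel)"
proof -
  let ?I = "fourier_integral w"
  have [measurable]: "w \<in> borel_measurable borel"
    using w by (simp add: borel_measurable_integrable)
  define f where "f k \<xi> = ennreal (exp (- (1 / real (Suc k)) * (norm \<xi>)\<^sup>2) * (cmod (?I \<xi>))\<^sup>2)" for k \<xi>
  have f_measurable: "f k \<in> borel_measurable lborel" for k
    unfolding f_def[abs_def] by measurable
  have "incseq f"
  proof (rule incseq_SucI, rule le_funI)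
    fix k and \<xi> :: 'a
    have "- (1 / real (Suc k)) * (norm \<xi>)\<^sup>2 \<le> - (1 / real (Suc (Suc k))) * (norm \<xi>)\<^sup>2"
      by (intro mult_right_mono) (auto simp: frac_le)
    then show "f k \<xi> \<le> f (Suc k) \<xi>"
      unfolding f_def by (intro ennreal_leI mult_right_mono) auto
  qed
  have "(\<lambda>k. f k \<xi>) \<longlonglongrightarrow> ennreal ((cmod (?I \<xi>))\<^sup>2)" for \<xi>
  proof -
    have "(\<lambda>k. exp (- (1 / real (Suc k)) * (norm \<xi>)\<^sup>2) * (cmod (?I \<xi>))\<^sup>2)
        \<longlonglongrightarrow> exp (- 0 * (norm \<xi>)\<^sup>2) * (cmod (?I \<xi>))\<^sup>2"
      by (intro tendsto_intros LIMSEQ_Suc[OF lim_const_over_n])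
    then show ?thesis
      unfolding f_def by (intro tendsto_ennrealI) simp
  qed
  moreover have "(\<lambda>k. f k \<xi>) \<longlonglongrightarrow> (SUP k. f k \<xi>)" for \<xi>
    using \<open>incseq f\<close> by (intro LIMSEQ_SUP) (auto simp: incseq_def le_fun_def)
  ultimately have "(SUP k. f k \<xi>) = ennreal ((cmod (?I \<xi>))\<^sup>2)" for \<xi>
    using LIMSEQ_unique by blast
  then have "(\<integral>\<^sup>+\<xi>. ennreal ((cmod (?I \<xi>))\<^sup>2) \<partial>lborel) = (SUP k. \<integral>\<^sup>+\<xi>. f k \<xi> \<partial>lborel)"
    using nn_integral_monotone_convergence_SUP[OF \<open>incseq f\<close> f_measurable] by simp
  also have "\<dots> \<le> ennreal ((2 * pi) ^ DIM('a)) * (\<integral>\<^sup>+x. ennreal ((cmod (w x))\<^sup>2) \<partial>lborel)"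
    unfolding f_def by (intro SUP_least nn_integral_gaussian_mult_fourier_integral_sq_le w) simp
  finally show ?thesis .
qed

lemma nn_integral_fourier_L1_sq_le:
  fixes w :: "'a::euclidean_space \<Rightarrow> complex"
  assumes w: "integrable lborel w"
  shows "(\<integral>\<^sup>+\<xi>. ennreal ((cmod (fourier_L1 w \<xi>))\<^sup>2) \<partial>lborel)
     \<le> ennreal (fourier_const TYPE('a)) * (\<integral>\<^sup>+x. ennreal ((cmod (w x))\<^sup>2) \<partial>lborel)"
proof -
  let ?\<kappa> = "fourier_const TYPE('a)"
  have "(\<integral>\<^sup>+\<xi>. ennreal ((cmod (fourier_L1 w \<xi>))\<^sup>2) \<partial>lborel)
      = ennreal (?\<kappa>\<^sup>2) * (\<integral>\<^sup>+\<xi>. ennreal ((cmod (fourier_integral w \<xi>))\<^sup>2) \<partial>lborel)"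
    using w fourier_const_pos[where 'a='a]
    by (subst nn_integral_cmult[symmetric])
       (auto simp: fourier_L1_eq norm_mult power_mult_distrib ennreal_mult borel_measurable_integrable)
  also have "\<dots> \<le> ennreal (?\<kappa>\<^sup>2) * (ennreal ((2 * pi) ^ DIM('a)) * (\<integral>\<^sup>+x. ennreal ((cmod (w x))\<^sup>2) \<partial>lborel))"
    by (intro mult_left_mono nn_integral_fourier_integral_sq_le w) simp
  also have "\<dots> = ennreal (?\<kappa>\<^sup>2 * (2 * pi) ^ DIM('a)) * (\<integral>\<^sup>+x. ennreal ((cmod (w x))\<^sup>2) \<partial>lborel)"
    by (simp add: ennreal_mult mult.assoc)
  also have "?\<kappa>\<^sup>2 * (2 * pi) ^ DIM('a) = ?\<kappa>"
    using fourier_const_mult[where 'a='a] by (simp add: power2_eq_square mult.assoc)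
  finally show ?thesis .
qed

lemma is_fourier_L2_test_indicator_cnj:
  fixes u v :: "'a::euclidean_space \<Rightarrow> complex"
  assumes uv: "is_fourier_L2 u v" and S: "S \<in> sets lborel" "emeasure lborel S < \<infinity>"
  defines "w \<equiv> \<lambda>\<xi>. indicator S \<xi> * cnj (v \<xi>)"
  shows "integrable lborel w"
    and "(\<integral>\<^sup>+\<xi>. ennreal ((cmod (w \<xi>))\<^sup>2) \<partial>lborel) = ennreal (LINT \<xi>:S|lborel. (cmod (v \<xi>))\<^sup>2)"
    and "of_real (LINT \<xi>:S|lborel. (cmod (v \<xi>))\<^sup>2) = (LINT x|lborel. u x * fourier_L1 w x)"
proof -
  have v: "square_integrable v"
    using uv unfolding is_fourier_L2_def by blast
  have [measurable]: "v \<in> borel_measurable borel" "S \<in> sets borel"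
    using v S by (simp_all add: square_integrable_measurable)
  have "(\<lambda>\<xi>. cnj (v \<xi>)) \<in> borel_measurable borel"
    by (intro borel_measurable_continuous_on[where f=cnj] continuous_intros) simp
  then have [measurable]: "w \<in> borel_measurable borel"
    unfolding w_def by measurable
  have int: "integrable lborel (\<lambda>\<xi>. indicator S \<xi> * (cmod (v \<xi>))\<^sup>2)"
    using v unfolding square_integrable_def
    by (rule conjE) (erule Bochner_Integration.integrable_bound, auto simp: indicator_def)
  have w_sq: "(cmod (w \<xi>))\<^sup>2 = indicator S \<xi> * (cmod (v \<xi>))\<^sup>2" for \<xi>
    by (auto simp: w_def indicator_def)
  have set_integral_eq: "(LINT \<xi>:S|lborel. (cmod (v \<xi>))\<^sup>2) = (LINT \<xi>|lborel. indicator S \<xi> * (cmod (v \<xi>))\<^sup>2)"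
    by (simp add: set_lebesgue_integral_def)
  show "integrable lborel w"
    by (rule Bochner_Integration.integrable_bound[OF square_integrable_integrable_indicator[OF v S]])
       (measurable, auto simp: w_def indicator_def)
  moreover have "square_integrable w"
    using int unfolding square_integrable_def w_sq by simp
  ultimately have "(LINT \<xi>|lborel. v \<xi> * w \<xi>) = (LINT x|lborel. u x * fourier_L1 w x)"
    using uv unfolding is_fourier_L2_def by blast
  moreover have "(LINT \<xi>|lborel. v \<xi> * w \<xi>) = of_real (LINT \<xi>:S|lborel. (cmod (v \<xi>))\<^sup>2)"
    unfolding set_integral_eq
    by (subst Bochner_Integration.integral_of_real[OF int, symmetric])
       (intro Bochner_Integration.integral_cong refl,
        simp only: w_def of_real_mult complex_norm_square, simp add: indicator_def)
  ultimately show "of_real (LINT \<xi>:S|lborel. (cmod (v \<xi>))\<^sup>2) = (LINT x|lborel. u x * fourier_L1 w x)"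
    by simp
  show "(\<integral>\<^sup>+\<xi>. ennreal ((cmod (w \<xi>))\<^sup>2) \<partial>lborel) = ennreal (LINT \<xi>:S|lborel. (cmod (v \<xi>))\<^sup>2)"
    unfolding w_sq set_integral_eq by (rule nn_integral_eq_integral[OF int]) simp
qed

text \<open>By Cauchy-Schwarz and the Plancherel inequality applied to \<open>w = indicator S * cnj v\<close>,
  \<open>I\<^sup>2 \<le> \<parallel>u\<parallel>\<^sup>2 (2\<pi>)\<^sup>-\<^sup>n I\<close> for the integral \<open>I\<close> of \<open>\<bar>v\<bar>\<^sup>2\<close> over \<open>S\<close>.\<close>

lemma set_integral_fourier_L2_sq_le:
  fixes u v :: "'a::euclidean_space \<Rightarrow> complex"
  assumes u: "square_integrable u" and uv: "is_fourier_L2 u v"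
    and S: "S \<in> sets lborel" "emeasure lborel S < \<infinity>"
  shows "(LINT \<xi>:S|lborel. (cmod (v \<xi>))\<^sup>2) \<le> fourier_const TYPE('a) * l2norm_sq u"
proof -
  let ?\<kappa> = "fourier_const TYPE('a)"
  let ?w = "\<lambda>\<xi>. indicator S \<xi> * cnj (v \<xi>)"
  define I where "I = (LINT \<xi>:S|lborel. (cmod (v \<xi>))\<^sup>2)"
  note w = is_fourier_L2_test_indicator_cnj[OF uv S, folded I_def]
  have [measurable]: "u \<in> borel_measurable borel"
    using u by (rule square_integrable_measurable)
  have "I \<ge> 0"
    unfolding I_def set_lebesgue_integral_def by (intro integral_nonneg_AE) auto
  then have "I = norm (LINT x|lborel. u x * fourier_L1 ?w x)"
    using w(3) by (metis norm_of_real abs_of_nonneg)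
  then have "(ennreal I)\<^sup>2
      \<le> (\<integral>\<^sup>+x. ennreal ((cmod (u x))\<^sup>2) \<partial>lborel) * (\<integral>\<^sup>+x. ennreal ((cmod (fourier_L1 ?w x))\<^sup>2) \<partial>lborel)"
    using norm_integral_mult_sq_le[of u lborel "fourier_L1 ?w"] borel_measurable_integrable[OF w(1)] by simp
  also have "\<dots> \<le> ennreal (l2norm_sq u) * (ennreal ?\<kappa> * ennreal I)"
  proof (intro mult_mono)
    show "(\<integral>\<^sup>+x. ennreal ((cmod (u x))\<^sup>2) \<partial>lborel) \<le> ennreal (l2norm_sq u)"
      using u unfolding square_integrable_def l2norm_sq_def by (simp add: nn_integral_eq_integral)
    show "(\<integral>\<^sup>+x. ennreal ((cmod (fourier_L1 ?w x))\<^sup>2) \<partial>lborel) \<le> ennreal ?\<kappa> * ennreal I"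
      using nn_integral_fourier_L1_sq_le[OF w(1)] w(2) by simp
  qed auto
  finally have "I\<^sup>2 \<le> l2norm_sq u * (?\<kappa> * I)"
    using \<open>I \<ge> 0\<close> fourier_const_pos[where 'a='a] l2norm_sq_nonneg[of u]
    by (simp add: ennreal_power ennreal_mult[symmetric])
  then show ?thesis
    using \<open>I \<ge> 0\<close> fourier_const_pos[where 'a='a] l2norm_sq_nonneg[of u]
    by (cases "I = 0") (auto simp: I_def power2_eq_square mult_ac)
qed

theorem proposition1:
  fixes K \<beta> \<mu> :: real
  assumes "K > 0" and "\<beta> > 0" and "\<mu> > 0"
    and "\<forall>u :: 'a::euclidean_space \<Rightarrow> complex. H1 u \<and> l2norm_sq u = \<beta> \<longrightarrow>
           l2norm_sq u \<le> grad_norm_sq u / K^2 + \<mu>"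
  shows "\<forall>(u :: 'a \<Rightarrow> complex) v. H1 u \<and> l2norm_sq u = \<beta> \<and> is_fourier_L2 u v \<longrightarrow>
           \<mu> \<ge> (LINT \<xi>:cball 0 K|lborel. (cmod (v \<xi>))^2)"
proof (intro allI impI)
  fix u v :: "'a \<Rightarrow> complex"
  assume uv: "H1 u \<and> l2norm_sq u = \<beta> \<and> is_fourier_L2 u v"
  have "(LINT \<xi>:cball 0 K|lborel. (cmod (v \<xi>))^2) \<le> fourier_const TYPE('a) * \<beta>"
    using uv emeasure_bounded_finite[of "cball (0::'a) K"]
    by (auto simp: H1_def intro: set_integral_fourier_L2_sq_le)
  also have "\<dots> \<le> \<beta>"
    using fourier_const_le_1[where 'a='a] \<open>\<beta> > 0\<close> by simp
  also have "\<beta> \<le> \<mu>"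
    using le_offset_if_gradient_inequality[OF assms(4)] uv by blast
  finally show "\<mu> \<ge> (LINT \<xi>:cball 0 K|lborel. (cmod (v \<xi>))^2)" .
qed

end
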